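(* Let $m=p_1^{m_1}\cdots p_k^{m_k}$ and let $(K_n,\alpha)$ be an edge-labeled complete graph over $\mathbb{Z}/m\mathbb{Z}$ with ordered edge labels $a_1,\dots,a_{r_n}$, where each $a_s=p_1^{n_{s1}}\cdots p_k^{n_{sk}}$ with $0\le n_{sj}\le m_j$ is a positive divisor of $m$ representing a zero divisor of $\mathbb{Z}/m\mathbb{Z}$. (1) If $a_{r_n}\mid a_{r_n-1}\mid\cdots\mid a_2\mid a_1\mid m$ and $m\neq a_1$, then the set $B_m$ consisting of $(1,1,\dots,1)$ together with, for each $k=2,\dots,n$, the vector whose $v_k$-entry is $a_{r_{k-1}+1}$ and all other entries are $0$ (i.e. $(0,a_1,0,\dots,0)$, $(0,0,a_2,0,\dots,0)$, $(0,0,0,a_4,0,\dots,0)$, $\dots$, $(0,\dots,0,a_{r_{n-1}+1})$), is a minimum flow-up generating set of $[\mathbb{Z}/m\mathbb{Z}]_{(K_n,\alpha)}$; thus its rank is $n$. (2) If $a_1\mid a_2\mid\cdots\mid a_{r_n}\mid m$ and $m\ne a_{r_n}$, then the set $B_m$ consisting of $(1,1,\dots,1)$ together with, for each $k=2,\dots,n$, the vector whose entries at $v_k,v_{k+1},\dots,v_n$ equal $a_{r_n-(n-k)}$ and whose entries at $v_1,\dots,v_{k-1}$ are $0$, is a minimum flow-up generating set of $[\mathbb{Z}/m\mathbb{Z}]_{(K_n,\alpha)}$; thus its rank is $n$.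
   Context: A spline on an edge-labeled graph $(G,\alpha)$ over $\mathbb{Z}/m\mathbb{Z}$ (edges labeled by nonzero ideals) is a vector $(f_{v_1},\dots,f_{v_n})\in(\mathbb{Z}/m\mathbb{Z})^n$ with $f_{v_i}-f_{v_j}\in\alpha(v_iv_j)$ for every edge; the splines form a $\mathbb{Z}$-module $[\mathbb{Z}/m\mathbb{Z}]_{(G,\alpha)}$. An $i$-th flow-up class is a spline with $f_{v_i}\ne0$ and $f_{v_t}=0$ for $t<i$. A minimum generating set is a generating set of the $\mathbb{Z}$-module of smallest possible size, this size being the rank; a minimum flow-up generating set is a minimum generating set consisting of flow-up classes. $K_n$ is the complete graph on $v_1,\dots,v_n$; $r_k=k(k-1)/2$. The edges are enumerated so that for $1\le j<k\le n$ the edge $v_jv_k$ is $e_{r_{k-1}+j}$ (so $e_1=v_1v_2$, $e_2=v_1v_3$, $e_3=v_2v_3$, $e_4=v_1v_4,\dots$). "Ordered edge labels $a_1,\dots,a_{r_n}$" means $\alpha(e_s)$ is the ideal generated by $a_s+m\mathbb{Z}$. Vectors are written $(f_{v_1},\dots,f_{v_n})$. *)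

theory Defs
  imports Main "HOL-Number_Theory.Cong"
begin

text \<open>Elements of (Z/mZ)^n are represented by functions nat => int that are supported
  on the vertex indices {1..n} and take canonical representatives in {0..<m}.
  Vertex v_i corresponds to index i.\<close>

definition r :: "nat \<Rightarrow> nat" where
  "r k = k * (k - 1) div 2"

definition is_vec :: "nat \<Rightarrow> int \<Rightarrow> (nat \<Rightarrow> int) \<Rightarrow> bool" where
  "is_vec n m f \<longleftrightarrow> (\<forall>i\<in>{1..n}. 0 \<le> f i \<and> f i < m) \<and> (\<forall>i. i \<notin> {1..n} \<longrightarrow> f i = 0)"

definition vec_of :: "nat \<Rightarrow> int \<Rightarrow> (nat \<Rightarrow> int) \<Rightarrow> (nat \<Rightarrow> int)" where
  "vec_of n m h = (\<lambda>i. if i \<in> {1..n} then h i mod m else 0)"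

definition in_ideal :: "int \<Rightarrow> int \<Rightarrow> int \<Rightarrow> bool" where
  "in_ideal m a x \<longleftrightarrow> (\<exists>c. [x = c * a] (mod m))"

text \<open>Splines on (K_n, alpha) with ordered edge labels a_1,...,a_{r_n}:
  the edge v_j v_k (j < k) is e_{r(k-1)+j}, labelled by the ideal generated by a (r(k-1)+j).\<close>
definition is_spline :: "nat \<Rightarrow> int \<Rightarrow> (nat \<Rightarrow> int) \<Rightarrow> (nat \<Rightarrow> int) \<Rightarrow> bool" where
  "is_spline n m a f \<longleftrightarrow> is_vec n m f \<and>
     (\<forall>j k. 1 \<le> j \<and> j < k \<and> k \<le> n \<longrightarrow> in_ideal m (a (r (k - 1) + j)) (f j - f k))"

definition splines :: "nat \<Rightarrow> int \<Rightarrow> (nat \<Rightarrow> int) \<Rightarrow> (nat \<Rightarrow> int) set" where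
  "splines n m a = {f. is_spline n m a f}"

definition gen_set :: "nat \<Rightarrow> int \<Rightarrow> (nat \<Rightarrow> int) \<Rightarrow> (nat \<Rightarrow> int) set \<Rightarrow> bool" where
  "gen_set n m a S \<longleftrightarrow> finite S \<and> S \<subseteq> splines n m a \<and>
     (\<forall>f\<in>splines n m a. \<exists>c :: (nat \<Rightarrow> int) \<Rightarrow> int.
        f = vec_of n m (\<lambda>i. \<Sum>g\<in>S. c g * g i))"

definition min_gen_set :: "nat \<Rightarrow> int \<Rightarrow> (nat \<Rightarrow> int) \<Rightarrow> (nat \<Rightarrow> int) set \<Rightarrow> bool" where
  "min_gen_set n m a S \<longleftrightarrow> gen_set n m a S \<and> (\<forall>T. gen_set n m a T \<longrightarrow> card S \<le> card T)"

definition spline_rank :: "nat \<Rightarrow> int \<Rightarrow> (nat \<Rightarrow> int) \<Rightarrow> nat" where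
  "spline_rank n m a = (LEAST k. \<exists>S. gen_set n m a S \<and> card S = k)"

definition flow_up :: "nat \<Rightarrow> (nat \<Rightarrow> int) \<Rightarrow> bool" where
  "flow_up i f \<longleftrightarrow> f i \<noteq> 0 \<and> (\<forall>t. 1 \<le> t \<and> t < i \<longrightarrow> f t = 0)"

definition min_flow_up_gen_set :: "nat \<Rightarrow> int \<Rightarrow> (nat \<Rightarrow> int) \<Rightarrow> (nat \<Rightarrow> int) set \<Rightarrow> bool" where
  "min_flow_up_gen_set n m a S \<longleftrightarrow> min_gen_set n m a S \<and>
     (\<forall>f\<in>S. \<exists>i\<in>{1..n}. flow_up i f)"

definition zero_divisor_mod :: "int \<Rightarrow> int \<Rightarrow> bool" where
  "zero_divisor_mod m a \<longleftrightarrow> (\<exists>y. \<not> m dvd y \<and> m dvd (a * y))"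

end

theory Submission
  imports Defs "HOL-Library.FuncSet"
begin

(* Attach every vertex v_i, i >= 2, to an earlier vertex v_prev(i) -- v_1 in part (1), v_(i-1) in
   part (2) -- with weight b_i, the label carried by the i-th proposed vector. The divisibility
   chain makes b_i divide f(v_i) - f(v_prev(i)) for every spline f, and makes each proposed vector
   a spline. Record a spline f by f(v_1) and the quotients (f(v_i) - f(v_prev(i))) / b_i: since
   prev(i) < i, f is determined by these coordinates, and the proposed vectors are the splines
   whose coordinates are the unit vectors, so they generate. For minimality, every b_i times
   p = m / a_1 (resp. m / a_(r_n)) divides m, and p >= 2 because that label is a proper divisor
   of m; hence the coordinates are additive modulo p and map the splines onto (Z/pZ)^n, a group
   of size p^n that no fewer than n elements generate. *)

lemma r_Suc: "r (Suc k) = r k + k"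
proof (cases k)
  case (Suc j)
  have "Suc (Suc j) * Suc j = Suc j * j + 2 * Suc j" by simp
  then show ?thesis unfolding r_def using Suc by simp
qed (simp add: r_def)

lemma r_mono: "k \<le> l \<Longrightarrow> r k \<le> r l"
  unfolding r_def by (intro div_le_mono mult_le_mono) auto

lemma r_diff_eq: "1 \<le> k \<Longrightarrow> k \<le> n \<Longrightarrow> r n - (n - k) = r (n - 1) + (k - 1)"
  using r_Suc[of "n - 1"] by (cases n) auto

lemma edge_index_in_range: "1 \<le> j \<Longrightarrow> j < k \<Longrightarrow> k \<le> n \<Longrightarrow> r (k - 1) + j \<in> {1..r n}"
  using r_Suc[of "k - 1"] r_mono[of k n] by auto

lemma dvd_chain_up:
  fixes a :: "nat \<Rightarrow> int"
  assumes "\<forall>s\<in>{1..<N}. a s dvd a (s + 1)" and "1 \<le> s" "s \<le> t" "t \<le> N"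
  shows "a s dvd a t"
  using \<open>s \<le> t\<close> \<open>t \<le> N\<close>
proof (induction t rule: dec_induct)
  case (step t)
  then show ?case using assms(1,2) by (auto intro: dvd_trans)
qed simp

lemma dvd_chain_down:
  fixes a :: "nat \<Rightarrow> int"
  assumes "\<forall>s\<in>{1..<N}. a (s + 1) dvd a s" and "1 \<le> s" "s \<le> t" "t \<le> N"
  shows "a t dvd a s"
  using \<open>s \<le> t\<close> \<open>t \<le> N\<close>
proof (induction t rule: dec_induct)
  case (step t)
  then show ?case using assms(1,2) by (auto intro: dvd_trans)
qed simp

lemma in_ideal_iff_dvd: "a dvd m \<Longrightarrow> in_ideal m a x \<longleftrightarrow> a dvd x"
  unfolding in_ideal_def
proof
  assume "a dvd m" "\<exists>c. [x = c * a] (mod m)"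
  then obtain c where "[x = c * a] (mod a)" using cong_dvd_modulus by blast
  then show "a dvd x" using cong_dvd_iff by fastforce
next
  assume "a dvd x"
  then obtain c where "x = c * a" by (metis dvd_def mult.commute)
  then show "\<exists>c. [x = c * a] (mod m)" by (intro exI[of _ c]) simp
qed

lemma splines_iff:
  assumes "\<forall>s\<in>{1..r n}. a s dvd m"
  shows "f \<in> splines n m a \<longleftrightarrow> is_vec n m f \<and>
     (\<forall>j k. 1 \<le> j \<and> j < k \<and> k \<le> n \<longrightarrow> a (r (k - 1) + j) dvd f j - f k)"
  using assms edge_index_in_range unfolding splines_def is_spline_def
  by (auto simp: in_ideal_iff_dvd)

lemma splines_is_vec: "f \<in> splines n m a \<Longrightarrow> is_vec n m f"
  by (simp add: splines_def is_spline_def)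

lemma spline_edge_dvd:
  assumes "\<forall>s\<in>{1..r n}. a s dvd m" and "f \<in> splines n m a" and "1 \<le> j" "j < k" "k \<le> n"
  shows "a (r (k - 1) + j) dvd f j - f k"
  using assms unfolding splines_iff[OF assms(1)] by blast

lemma vec_of_in_splines:
  assumes "0 < m" and labels: "\<forall>s\<in>{1..r n}. a s dvd m"
    and "\<forall>j k. 1 \<le> j \<and> j < k \<and> k \<le> n \<longrightarrow> a (r (k - 1) + j) dvd h j - h k"
  shows "vec_of n m h \<in> splines n m a"
  unfolding splines_iff[OF labels]
proof (intro conjI allI impI)
  show "is_vec n m (vec_of n m h)" using \<open>0 < m\<close> by (auto simp: is_vec_def vec_of_def)
  fix j k assume jk: "1 \<le> j \<and> j < k \<and> k \<le> n"
  have "[h j mod m - h k mod m = h j - h k] (mod m)" by (simp add: cong_def mod_diff_eq)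
  then have "[h j mod m - h k mod m = h j - h k] (mod a (r (k - 1) + j))"
    using labels edge_index_in_range jk by (blast intro: cong_dvd_modulus)
  then show "a (r (k - 1) + j) dvd vec_of n m h j - vec_of n m h k"
    using assms(3) jk cong_dvd_iff by (fastforce simp: vec_of_def)
qed

lemma lincomb_in_splines:
  assumes "0 < m" and labels: "\<forall>s\<in>{1..r n}. a s dvd m" and "\<forall>x\<in>I. F x \<in> splines n m a"
  shows "vec_of n m (\<lambda>i. \<Sum>x\<in>I. c x * F x i) \<in> splines n m a"
proof (rule vec_of_in_splines[OF assms(1,2)], intro allI impI)
  fix j k assume "1 \<le> j \<and> j < k \<and> k \<le> n"
  then have "a (r (k - 1) + j) dvd c x * (F x j - F x k)" if "x \<in> I" for x
    using assms(3) that unfolding splines_iff[OF labels] by simp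
  then show "a (r (k - 1) + j) dvd (\<Sum>x\<in>I. c x * F x j) - (\<Sum>x\<in>I. c x * F x k)"
    by (simp add: sum_subtractf[symmetric] right_diff_distrib[symmetric] dvd_sum)
qed

lemma spline_rank_eq_card: "min_gen_set n m a S \<Longrightarrow> spline_rank n m a = card S"
  unfolding spline_rank_def min_gen_set_def by (rule Least_equality) auto

lemma card_ge_if_spans_mod:
  fixes \<psi> :: "'a \<Rightarrow> nat \<Rightarrow> int"
  assumes p: "2 \<le> p" and "finite T"
    and spans: "\<And>v. v \<in> {1..n} \<rightarrow>\<^sub>E {0..<p} \<Longrightarrow>
      \<exists>c. \<forall>i\<in>{1..n}. [v i = (\<Sum>g\<in>T. c g * \<psi> g i)] (mod p)"
  shows "n \<le> card T"
proof -
  define \<phi> where "\<phi> c = (\<lambda>i\<in>{1..n}. (\<Sum>g\<in>T. c g * \<psi> g i) mod p)" for c :: "'a \<Rightarrow> int"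
  have "{1..n} \<rightarrow>\<^sub>E {0..<p} \<subseteq> \<phi> ` (T \<rightarrow>\<^sub>E {0..<p})"
  proof
    fix v assume v: "v \<in> {1..n} \<rightarrow>\<^sub>E {0..<p}"
    obtain c where c: "\<forall>i\<in>{1..n}. [v i = (\<Sum>g\<in>T. c g * \<psi> g i)] (mod p)"
      using spans[OF v] by blast
    define c' where "c' = (\<lambda>g\<in>T. c g mod p)"
    have "v i = \<phi> c' i" for i
    proof (cases "i \<in> {1..n}")
      case True
      have "[(\<Sum>g\<in>T. c g * \<psi> g i) = (\<Sum>g\<in>T. c' g * \<psi> g i)] (mod p)"
        by (rule cong_sum) (simp add: c'_def cong_def mod_mult_left_eq)
      then have "[v i = (\<Sum>g\<in>T. c' g * \<psi> g i)] (mod p)" using c True by (blast intro: cong_trans)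
      moreover have "v i mod p = v i" using v True by (auto simp: PiE_iff)
      ultimately show ?thesis using True by (simp add: \<phi>_def cong_def)
    next
      case False
      then show ?thesis using PiE_arb[OF v False] by (auto simp: \<phi>_def)
    qed
    moreover have "c' \<in> T \<rightarrow>\<^sub>E {0..<p}" using p by (simp add: c'_def)
    ultimately show "v \<in> \<phi> ` (T \<rightarrow>\<^sub>E {0..<p})" by blast
  qed
  then have "card ({1..n} \<rightarrow>\<^sub>E {0..<p}) \<le> card (\<phi> ` (T \<rightarrow>\<^sub>E {0..<p}))"
    using \<open>finite T\<close> by (intro card_mono finite_imageI finite_PiE) auto
  also have "\<dots> \<le> card (T \<rightarrow>\<^sub>E {0..<p})"
    using \<open>finite T\<close> by (intro card_image_le finite_PiE) auto
  finally have "nat p ^ n \<le> nat p ^ card T" using \<open>finite T\<close> by (simp add: card_PiE)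
  then show ?thesis using p by (simp add: power_le_imp_le_exp)
qed

definition diff_quot :: "(nat \<Rightarrow> nat) \<Rightarrow> (nat \<Rightarrow> int) \<Rightarrow> (nat \<Rightarrow> int) \<Rightarrow> nat \<Rightarrow> int" where
  "diff_quot prev \<beta> h i = (h i - h (prev i)) div \<beta> i"

lemma diff_quot_sum:
  assumes "\<beta> i \<noteq> 0" and "\<forall>x\<in>I. \<beta> i dvd F x i - F x (prev i)"
  shows "diff_quot prev \<beta> (\<lambda>j. \<Sum>x\<in>I. c x * F x j) i = (\<Sum>x\<in>I. c x * diff_quot prev \<beta> (F x) i)"
proof -
  have "(\<Sum>x\<in>I. c x * F x i) - (\<Sum>x\<in>I. c x * F x (prev i)) = (\<Sum>x\<in>I. c x * (F x i - F x (prev i)))"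
    by (simp add: sum_subtractf[symmetric] right_diff_distrib)
  also have "\<dots> = \<beta> i * (\<Sum>x\<in>I. c x * diff_quot prev \<beta> (F x) i)"
    unfolding sum_distrib_left
    by (rule sum.cong) (use assms(2) in \<open>auto simp: diff_quot_def\<close>)
  finally show ?thesis using assms(1) by (simp add: diff_quot_def)
qed

lemma diff_quot_cong:
  fixes h h' :: "nat \<Rightarrow> int"
  assumes "\<beta> i * p dvd m" and "\<beta> i \<noteq> 0"
    and "\<beta> i dvd h i - h (prev i)" and "\<beta> i dvd h' i - h' (prev i)"
    and "[h i = h' i] (mod m)" and "[h (prev i) = h' (prev i)] (mod m)"
  shows "[diff_quot prev \<beta> h i = diff_quot prev \<beta> h' i] (mod p)"
proof -
  obtain q q' where q: "h i - h (prev i) = \<beta> i * q" and q': "h' i - h' (prev i) = \<beta> i * q'"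
    using assms(3,4) by (elim dvdE)
  have "[\<beta> i * q = \<beta> i * q'] (mod \<beta> i * p)"
    using cong_diff[OF assms(5,6)] assms(1) unfolding q q' by (rule cong_dvd_modulus)
  then have "[q = q'] (mod p)"
    using assms(2) by (simp add: cong_iff_dvd_diff right_diff_distrib[symmetric])
  then show ?thesis using assms(2) by (simp add: diff_quot_def q q')
qed

lemma diff_quot_inj:
  assumes prev: "\<And>i. i \<in> {1..n} \<Longrightarrow> prev i < i" and "h 0 = h' 0"
    and dvd: "\<And>i. i \<in> {1..n} \<Longrightarrow> \<beta> i dvd h i - h (prev i)"
      "\<And>i. i \<in> {1..n} \<Longrightarrow> \<beta> i dvd h' i - h' (prev i)"
    and eq: "\<And>i. i \<in> {1..n} \<Longrightarrow> diff_quot prev \<beta> h i = diff_quot prev \<beta> h' i"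
  shows "i \<le> n \<Longrightarrow> h i = h' i"
proof (induction i rule: less_induct)
  case (less i)
  show ?case
  proof (cases "i = 0")
    case True
    with \<open>h 0 = h' 0\<close> show ?thesis by simp
  next
    case False
    then have i: "i \<in> {1..n}" using less.prems by simp
    have "h (prev i) = h' (prev i)" using less.IH prev[OF i] less.prems by simp
    moreover have "h i - h (prev i) = h' i - h' (prev i)"
      using eq[OF i] dvd(1)[OF i] dvd(2)[OF i] unfolding diff_quot_def by (metis dvd_mult_div_cancel)
    ultimately show ?thesis by simp
  qed
qed

(* Index 0 serves as a root at which every vector vanishes: with prev 1 = 0 and \<beta> 1 = 1 the
   first coordinate diff_quot prev \<beta> f 1 is f 1 itself. *)
locale triangular_spline_basis =
  fixes n :: nat and m :: int and a :: "nat \<Rightarrow> int" and p :: int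
    and prev :: "nat \<Rightarrow> nat" and \<beta> :: "nat \<Rightarrow> int" and E :: "nat \<Rightarrow> nat \<Rightarrow> int"
  assumes m_pos: "0 < m"
    and labels_dvd: "\<forall>s\<in>{1..r n}. a s dvd m"
    and p_ge_2: "2 \<le> p"
    and \<beta>_mult_p_dvd: "i \<in> {1..n} \<Longrightarrow> \<beta> i * p dvd m"
    and prev_less: "i \<in> {1..n} \<Longrightarrow> prev i < i"
    and splines_diff_dvd: "f \<in> splines n m a \<Longrightarrow> i \<in> {1..n} \<Longrightarrow> \<beta> i dvd f i - f (prev i)"
    and basis_in_splines: "x \<in> {1..n} \<Longrightarrow> E x \<in> splines n m a"
    and diff_quot_basis:
      "x \<in> {1..n} \<Longrightarrow> i \<in> {1..n} \<Longrightarrow> diff_quot prev \<beta> (E x) i = (if x = i then 1 else 0)"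
begin

lemma \<beta>_nonzero: "i \<in> {1..n} \<Longrightarrow> \<beta> i \<noteq> 0"
  using \<beta>_mult_p_dvd m_pos by fastforce

lemma lincomb_diff_dvd:
  assumes "\<forall>x\<in>I. F x \<in> splines n m a" and "i \<in> {1..n}"
  shows "\<beta> i dvd (\<Sum>x\<in>I. c x * F x i) - (\<Sum>x\<in>I. c x * F x (prev i))"
  using assms splines_diff_dvd
  by (simp add: sum_subtractf[symmetric] right_diff_distrib[symmetric] dvd_sum)

lemma diff_quot_lincomb:
  assumes "\<forall>x\<in>I. F x \<in> splines n m a" and "i \<in> {1..n}"
  shows "diff_quot prev \<beta> (\<lambda>j. \<Sum>x\<in>I. c x * F x j) i = (\<Sum>x\<in>I. c x * diff_quot prev \<beta> (F x) i)"
  using assms \<beta>_nonzero splines_diff_dvd by (intro diff_quot_sum) auto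

lemma sum_diff_quot_basis:
  assumes "i \<in> {1..n}"
  shows "(\<Sum>x\<in>{1..n}. w x * diff_quot prev \<beta> (E x) i) = w i"
proof -
  have "(\<Sum>x\<in>{1..n}. w x * diff_quot prev \<beta> (E x) i) = (\<Sum>x\<in>{1..n}. if x = i then w x else 0)"
    using assms diff_quot_basis by (intro sum.cong) auto
  then show ?thesis using assms by simp
qed

lemma diff_quot_vec_of_lincomb:
  assumes F: "\<forall>x\<in>I. F x \<in> splines n m a" and i: "i \<in> {1..n}"
  shows "[diff_quot prev \<beta> (vec_of n m (\<lambda>j. \<Sum>x\<in>I. c x * F x j)) i
          = (\<Sum>x\<in>I. c x * diff_quot prev \<beta> (F x) i)] (mod p)"
proof -
  let ?h = "\<lambda>j. \<Sum>x\<in>I. c x * F x j"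
  have "F x 0 = 0" if "x \<in> I" for x using splines_is_vec[of "F x" n m a] F that by (simp add: is_vec_def)
  then have h_cong: "[vec_of n m ?h j = ?h j] (mod m)" if "j \<le> n" for j
    using that by (cases "j = 0") (auto simp: vec_of_def cong_def)
  have "prev i \<le> n" using prev_less[OF i] i by simp
  have "[diff_quot prev \<beta> (vec_of n m ?h) i = diff_quot prev \<beta> ?h i] (mod p)"
  proof (rule diff_quot_cong[where m = m])
    show "\<beta> i * p dvd m" using i by (rule \<beta>_mult_p_dvd)
    show "\<beta> i \<noteq> 0" using i by (rule \<beta>_nonzero)
    show "\<beta> i dvd vec_of n m ?h i - vec_of n m ?h (prev i)"
      using lincomb_in_splines[OF m_pos labels_dvd F] i by (rule splines_diff_dvd)
    show "\<beta> i dvd ?h i - ?h (prev i)" using F i by (rule lincomb_diff_dvd)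
    show "[vec_of n m ?h i = ?h i] (mod m)" using i h_cong by simp
    show "[vec_of n m ?h (prev i) = ?h (prev i)] (mod m)" using \<open>prev i \<le> n\<close> by (rule h_cong)
  qed
  then show ?thesis using diff_quot_lincomb[OF F i] by simp
qed

lemma card_ge_if_gen_set:
  assumes T: "gen_set n m a T"
  shows "n \<le> card T"
proof (rule card_ge_if_spans_mod[OF p_ge_2])
  show "finite T" using T by (simp add: gen_set_def)
  fix v :: "nat \<Rightarrow> int"
  define f where "f = vec_of n m (\<lambda>j. \<Sum>x\<in>{1..n}. v x * E x j)"
  have E: "\<forall>x\<in>{1..n}. E x \<in> splines n m a" using basis_in_splines by blast
  then have "f \<in> splines n m a" unfolding f_def by (rule lincomb_in_splines[OF m_pos labels_dvd])
  then obtain c where c: "f = vec_of n m (\<lambda>j. \<Sum>g\<in>T. c g * id g j)"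
    using T by (auto simp: gen_set_def)
  have T_splines: "\<forall>g\<in>T. id g \<in> splines n m a" using T by (auto simp: gen_set_def)
  show "\<exists>c. \<forall>i\<in>{1..n}. [v i = (\<Sum>g\<in>T. c g * diff_quot prev \<beta> g i)] (mod p)"
  proof (intro exI[of _ c] ballI)
    fix i assume i: "i \<in> {1..n}"
    have "[diff_quot prev \<beta> f i = v i] (mod p)"
      using diff_quot_vec_of_lincomb[OF E i, of v] sum_diff_quot_basis[OF i] by (simp add: f_def)
    moreover have "[diff_quot prev \<beta> f i = (\<Sum>g\<in>T. c g * diff_quot prev \<beta> g i)] (mod p)"
      using diff_quot_vec_of_lincomb[OF T_splines i, of c] unfolding c by simp
    ultimately show "[v i = (\<Sum>g\<in>T. c g * diff_quot prev \<beta> g i)] (mod p)"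
      by (metis cong_sym cong_trans)
  qed
qed

lemma spline_eq_basis_lincomb:
  assumes f: "f \<in> splines n m a"
  shows "f = vec_of n m (\<lambda>j. \<Sum>x\<in>{1..n}. diff_quot prev \<beta> f x * E x j)"
proof -
  define h where "h j = (\<Sum>x\<in>{1..n}. diff_quot prev \<beta> f x * E x j)" for j
  have E: "\<forall>x\<in>{1..n}. E x \<in> splines n m a" using basis_in_splines by blast
  have "E x 0 = 0" if "x \<in> {1..n}" for x using splines_is_vec[of "E x" n m a] E that by (simp add: is_vec_def)
  then have f0: "f 0 = h 0" using splines_is_vec[OF f] by (simp add: h_def is_vec_def)
  have f_dvd: "\<beta> i dvd f i - f (prev i)" if "i \<in> {1..n}" for i using f that by (rule splines_diff_dvd)
  have h_dvd: "\<beta> i dvd h i - h (prev i)" if "i \<in> {1..n}" for i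
    unfolding h_def using E that by (rule lincomb_diff_dvd)
  have f_h: "diff_quot prev \<beta> f i = diff_quot prev \<beta> h i" if "i \<in> {1..n}" for i
    unfolding h_def using diff_quot_lincomb[OF E that] sum_diff_quot_basis[OF that] by simp
  have "f i = h i" if "i \<le> n" for i by (rule diff_quot_inj[OF prev_less f0 f_dvd h_dvd f_h that])
  then have "f i = vec_of n m h i" for i
    using splines_is_vec[OF f] by (cases "i \<in> {1..n}") (auto simp: vec_of_def is_vec_def)
  then show ?thesis unfolding h_def by (rule ext)
qed

lemma inj_on_basis: "inj_on E {1..n}"
proof (rule inj_onI)
  fix x y assume "x \<in> {1..n}" "y \<in> {1..n}" "E x = E y"
  then show "x = y" using diff_quot_basis[of x x] diff_quot_basis[of y x] by (metis zero_neq_one)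
qed

lemma card_basis: "card (E ` {1..n}) = n"
  using card_image[OF inj_on_basis] by simp

lemma gen_set_basis: "gen_set n m a (E ` {1..n})"
  unfolding gen_set_def
proof (intro conjI ballI)
  show "E ` {1..n} \<subseteq> splines n m a" using basis_in_splines by blast
  fix f assume f: "f \<in> splines n m a"
  define c where "c g = diff_quot prev \<beta> f (inv_into {1..n} E g)" for g
  have "c (E x) = diff_quot prev \<beta> f x" if "x \<in> {1..n}" for x
    by (simp only: c_def inv_into_f_f[OF inj_on_basis that])
  then have "(\<Sum>g\<in>E ` {1..n}. c g * g j) = (\<Sum>x\<in>{1..n}. diff_quot prev \<beta> f x * E x j)" for j
    unfolding sum.reindex[OF inj_on_basis] by (intro sum.cong) auto
  then show "\<exists>c. f = vec_of n m (\<lambda>i. \<Sum>g\<in>E ` {1..n}. c g * g i)"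
    using spline_eq_basis_lincomb[OF f] by (intro exI[of _ c]) simp
qed simp

lemma min_gen_set_basis: "min_gen_set n m a (E ` {1..n})"
  unfolding min_gen_set_def using gen_set_basis card_basis card_ge_if_gen_set by simp

lemma spline_rank_eq: "spline_rank n m a = n"
  using spline_rank_eq_card[OF min_gen_set_basis] card_basis by simp

lemma min_flow_up_gen_set_basis:
  assumes "\<And>x. x \<in> {1..n} \<Longrightarrow> flow_up x (E x)"
  shows "min_flow_up_gen_set n m a (E ` {1..n})"
  using min_gen_set_basis assms unfolding min_flow_up_gen_set_def by blast

end

lemma div_ge_2_if_proper_divisor:
  fixes b m :: int
  assumes "0 < b" "b dvd m" "b \<noteq> m" "0 < m"
  shows "2 \<le> m div b"
proof -
  have "b * (m div b) = m" using assms(2) by simp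
  moreover have "0 < m div b" using assms by (simp add: pos_imp_zdiv_pos_iff zdvd_imp_le)
  ultimately show ?thesis using assms(3) by (cases "m div b = 1") auto
qed

lemma mult_quotient_dvd:
  fixes b c m :: int
  assumes "c dvd m" "b dvd c"
  shows "b * (m div c) dvd m"
proof -
  have "b * (m div c) dvd c * (m div c)" using assms(2) by (rule mult_dvd_mono) simp
  also have "c * (m div c) = m" using assms(1) by simp
  finally show ?thesis .
qed

lemma image_if_one_atLeastAtMost:
  "1 \<le> n \<Longrightarrow> (\<lambda>x. if x = 1 then u else G x) ` {1..n} = {u} \<union> G ` {2..(n::nat)}"
  by (auto simp: image_iff)

lemma vec_of_one_apply: "1 < m \<Longrightarrow> vec_of n m (\<lambda>_. 1) i = (if i \<in> {1..n} then 1 else 0)"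
  by (simp add: vec_of_def)

lemma vec_of_one_in_splines:
  "1 < m \<Longrightarrow> \<forall>s\<in>{1..r n}. a s dvd m \<Longrightarrow> vec_of n m (\<lambda>_. 1) \<in> splines n m a"
  by (rule vec_of_in_splines) auto

definition single_entry_vec :: "nat \<Rightarrow> int \<Rightarrow> (nat \<Rightarrow> int) \<Rightarrow> nat \<Rightarrow> nat \<Rightarrow> int" where
  "single_entry_vec n m a k = vec_of n m (\<lambda>i. if i = k then a (r (k - 1) + 1) else 0)"

lemma single_entry_vec_apply:
  "k \<in> {1..n} \<Longrightarrow> 0 < a (r (k - 1) + 1) \<Longrightarrow> a (r (k - 1) + 1) < m \<Longrightarrow>
    single_entry_vec n m a k i = (if i = k then a (r (k - 1) + 1) else 0)"
  by (auto simp: single_entry_vec_def vec_of_def)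

lemma single_entry_vec_in_splines:
  assumes "0 < m" and labels: "\<forall>s\<in>{1..r n}. a s dvd m"
    and chain: "\<forall>s\<in>{1..<r n}. a (s + 1) dvd a s" and k: "k \<in> {1..n}"
  shows "single_entry_vec n m a k \<in> splines n m a"
  unfolding single_entry_vec_def
proof (rule vec_of_in_splines[OF assms(1,2)], intro allI impI)
  fix j l assume jl: "1 \<le> j \<and> j < l \<and> l \<le> n"
  show "a (r (l - 1) + j) dvd (if j = k then a (r (k - 1) + 1) else 0) - (if l = k then a (r (k - 1) + 1) else 0)"
  proof (cases "j = k \<or> l = k")
    case True
    then have "r (k - 1) \<le> r (l - 1)" using jl by (intro r_mono) auto
    then have "a (r (l - 1) + j) dvd a (r (k - 1) + 1)"
      using dvd_chain_down[OF chain] edge_index_in_range[of j l n] jl k by simp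
    then show ?thesis using jl by auto
  qed auto
qed

lemma decreasing_label_bounds:
  fixes a :: "nat \<Rightarrow> int"
  assumes n: "2 \<le> n" and m: "1 < m" and labels: "\<forall>s\<in>{1..r n}. 0 < a s \<and> a s dvd m"
    and chain: "\<forall>s\<in>{1..<r n}. a (s + 1) dvd a s" and a1: "a 1 \<noteq> m" and k: "k \<in> {1..n}"
  shows "0 < a (r (k - 1) + 1)" and "a (r (k - 1) + 1) dvd a 1" and "a (r (k - 1) + 1) < m"
proof -
  have "1 \<in> {1..r n}" using edge_index_in_range[of 1 2 n] n by simp
  then have a1_lt: "a 1 < m" using labels a1 zdvd_imp_le[of "a 1" m] m by auto
  have idx: "r (k - 1) + 1 \<in> {1..r n}"
    using edge_index_in_range[of 1 k n] \<open>1 \<in> {1..r n}\<close> k by (cases "k = 1") (auto simp: r_def)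
  then show pos: "0 < a (r (k - 1) + 1)" using labels by blast
  show dvd: "a (r (k - 1) + 1) dvd a 1" by (rule dvd_chain_down[OF chain]) (use idx in auto)
  show "a (r (k - 1) + 1) < m" using zdvd_imp_le[OF dvd] labels \<open>1 \<in> {1..r n}\<close> a1_lt by fastforce
qed

lemma triangular_spline_basis_single_entry:
  fixes a :: "nat \<Rightarrow> int"
  assumes n: "2 \<le> n" and m: "1 < m" and labels: "\<forall>s\<in>{1..r n}. 0 < a s \<and> a s dvd m"
    and chain: "\<forall>s\<in>{1..<r n}. a (s + 1) dvd a s" and a1: "a 1 \<noteq> m"
  shows "triangular_spline_basis n m a (m div a 1) (\<lambda>x. if x = 1 then 0 else 1)
    (\<lambda>x. if x = 1 then 1 else a (r (x - 1) + 1))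
    (\<lambda>x. if x = 1 then vec_of n m (\<lambda>_. 1) else single_entry_vec n m a x)"
proof -
  note bounds = decreasing_label_bounds[OF assms]
  have L: "\<forall>s\<in>{1..r n}. a s dvd m" using labels by blast
  have "1 \<in> {1..r n}" using edge_index_in_range[of 1 2 n] n by simp
  show ?thesis
  proof unfold_locales
    show "0 < m" using m by simp
    show "\<forall>s\<in>{1..r n}. a s dvd m" by (rule L)
    show "2 \<le> m div a 1"
      using bounds(1)[of 1] L a1 m n \<open>1 \<in> {1..r n}\<close>
      by (intro div_ge_2_if_proper_divisor) (auto simp: r_def)
    fix i assume i: "i \<in> {1..n}"
    show "(if i = 1 then 1 else a (r (i - 1) + 1)) * (m div a 1) dvd m"
      by (rule mult_quotient_dvd) (use L \<open>1 \<in> {1..r n}\<close> bounds(2)[OF i] in auto)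
    show "(if i = 1 then 0 else 1) < i" using i by simp
    fix f assume f: "f \<in> splines n m a"
    have "a (r (i - 1) + 1) dvd f 1 - f i" if "i \<noteq> 1"
      by (rule spline_edge_dvd[OF L f]) (use i that in auto)
    then show "(if i = 1 then 1 else a (r (i - 1) + 1)) dvd f i - f (if i = 1 then 0 else 1)"
      by (auto simp: dvd_diff_commute)
  next
    fix x assume x: "x \<in> {1..n}"
    show "(if x = 1 then vec_of n m (\<lambda>_. 1) else single_entry_vec n m a x) \<in> splines n m a"
      using vec_of_one_in_splines[OF m L] single_entry_vec_in_splines[OF _ L chain] m x by simp
  next
    fix x i assume x: "x \<in> {1..n}" and i: "i \<in> {1..n}"
    have "a (r (i - 1) + 1) div a (r (i - 1) + 1) = 1" using bounds(1)[OF i] by simp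
    then show "diff_quot (\<lambda>x. if x = 1 then 0 else 1) (\<lambda>x. if x = 1 then 1 else a (r (x - 1) + 1))
        (if x = 1 then vec_of n m (\<lambda>_. 1) else single_entry_vec n m a x) i = (if x = i then 1 else 0)"
      using single_entry_vec_apply[where a = a, OF x bounds(1,3)[OF x]] x i vec_of_one_apply[OF m]
      by (auto simp: diff_quot_def)
  qed
qed

lemma min_flow_up_gen_set_single_entry:
  fixes a :: "nat \<Rightarrow> int"
  assumes n: "2 \<le> n" and m: "1 < m" and labels: "\<forall>s\<in>{1..r n}. 0 < a s \<and> a s dvd m"
    and chain: "\<forall>s\<in>{1..<r n}. a (s + 1) dvd a s" and a1: "a 1 \<noteq> m"
  shows "min_flow_up_gen_set n m a ({vec_of n m (\<lambda>_. 1)} \<union> single_entry_vec n m a ` {2..n})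
    \<and> spline_rank n m a = n"
proof -
  interpret triangular_spline_basis n m a "m div a 1" "\<lambda>x. if x = 1 then 0 else 1"
    "\<lambda>x. if x = 1 then 1 else a (r (x - 1) + 1)"
    "\<lambda>x. if x = 1 then vec_of n m (\<lambda>_. 1) else single_entry_vec n m a x"
    by (rule triangular_spline_basis_single_entry[OF assms])
  have flow: "flow_up x (if x = 1 then vec_of n m (\<lambda>_. 1) else single_entry_vec n m a x)"
    if "x \<in> {1..n}" for x
    using single_entry_vec_apply[where a = a, OF that decreasing_label_bounds(1,3)[OF assms that]]
      decreasing_label_bounds(1)[OF assms that] vec_of_one_apply[OF m] that
    by (auto simp: flow_up_def)
  have "{vec_of n m (\<lambda>_. 1)} \<union> single_entry_vec n m a ` {2..n}
      = (\<lambda>x. if x = 1 then vec_of n m (\<lambda>_. 1) else single_entry_vec n m a x) ` {1..n}"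
    using n by (intro image_if_one_atLeastAtMost[symmetric]) simp
  then show ?thesis using min_flow_up_gen_set_basis[OF flow] spline_rank_eq by (simp only:)
qed

definition tail_vec :: "nat \<Rightarrow> int \<Rightarrow> (nat \<Rightarrow> int) \<Rightarrow> nat \<Rightarrow> nat \<Rightarrow> int" where
  "tail_vec n m a k = vec_of n m (\<lambda>i. if k \<le> i then a (r n - (n - k)) else 0)"

lemma tail_vec_apply:
  "k \<in> {1..n} \<Longrightarrow> 0 < a (r n - (n - k)) \<Longrightarrow> a (r n - (n - k)) < m \<Longrightarrow>
    tail_vec n m a k i = (if k \<le> i \<and> i \<le> n then a (r n - (n - k)) else 0)"
  by (auto simp: tail_vec_def vec_of_def)

lemma tail_vec_in_splines:
  assumes "0 < m" and labels: "\<forall>s\<in>{1..r n}. a s dvd m"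
    and chain: "\<forall>s\<in>{1..<r n}. a s dvd a (s + 1)" and k: "k \<in> {1..n}"
  shows "tail_vec n m a k \<in> splines n m a"
proof -
  have "r n - (n - k) = r (n - 1) + (k - 1)" using k by (intro r_diff_eq) auto
  then have "tail_vec n m a k = vec_of n m (\<lambda>i. if k \<le> i then a (r (n - 1) + (k - 1)) else 0)"
    by (simp only: tail_vec_def)
  also have "\<dots> \<in> splines n m a"
  proof (rule vec_of_in_splines[OF assms(1,2)], intro allI impI)
    fix j l assume jl: "1 \<le> j \<and> j < l \<and> l \<le> n"
    show "a (r (l - 1) + j) dvd (if k \<le> j then a (r (n - 1) + (k - 1)) else 0)
            - (if k \<le> l then a (r (n - 1) + (k - 1)) else 0)"
    proof (cases "j < k \<and> k \<le> l")
      case True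
      have "r (l - 1) + j \<le> r (n - 1) + (k - 1)"
      proof (cases "l = n")
        case False
        have "r (l - 1) + j \<le> r l" using r_Suc[of "l - 1"] jl by (cases l) auto
        also have "r l \<le> r (n - 1)" using False jl by (intro r_mono) linarith
        finally show ?thesis by simp
      qed (use True in \<open>simp, arith\<close>)
      moreover have "r (n - 1) + (k - 1) \<le> r n" using r_Suc[of "n - 1"] k by (simp, linarith)
      ultimately have "a (r (l - 1) + j) dvd a (r (n - 1) + (k - 1))"
        using dvd_chain_up[OF chain] jl by simp
      then show ?thesis using True by simp
    qed (use jl in auto)
  qed
  finally show ?thesis .
qed

lemma spline_consecutive_diff_dvd:
  assumes labels: "\<forall>s\<in>{1..r n}. a s dvd m" and chain: "\<forall>s\<in>{1..<r n}. a s dvd a (s + 1)"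
    and f: "f \<in> splines n m a" and k: "k \<in> {2..n}"
  shows "a (r n - (n - k)) dvd f k - f (k - 1)"
proof -
  have eq: "r n - (n - k) = r (n - 1) + (k - 1)" using k by (intro r_diff_eq) auto
  have "a (r (n - 1) + (k - 1)) dvd f k - f n"
  proof (cases "k = n")
    case False
    have "r n = r (n - 1) + (n - 1)" using r_Suc[of "n - 1"] k by simp
    moreover have "k < n" using k False by simp
    ultimately have "r (n - 1) + k \<le> r n" by linarith
    then have "a (r (n - 1) + (k - 1)) dvd a (r (n - 1) + k)"
      by (rule dvd_chain_up[OF chain, rotated 2]) (use k in auto)
    also have "a (r (n - 1) + k) dvd f k - f n"
      by (rule spline_edge_dvd[OF labels f]) (use k False in auto)
    finally show ?thesis .
  qed simp
  moreover have "a (r (n - 1) + (k - 1)) dvd f (k - 1) - f n"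
    by (rule spline_edge_dvd[OF labels f]) (use k in auto)
  ultimately have "a (r (n - 1) + (k - 1)) dvd (f k - f n) - (f (k - 1) - f n)"
    by (rule dvd_diff)
  then show ?thesis unfolding eq by simp
qed

lemma increasing_label_bounds:
  fixes a :: "nat \<Rightarrow> int"
  assumes n: "2 \<le> n" and m: "1 < m" and labels: "\<forall>s\<in>{1..r n}. 0 < a s \<and> a s dvd m"
    and chain: "\<forall>s\<in>{1..<r n}. a s dvd a (s + 1)" and an: "a (r n) \<noteq> m" and k: "k \<in> {2..n}"
  shows "0 < a (r n - (n - k))" and "a (r n - (n - k)) dvd a (r n)" and "a (r n - (n - k)) < m"
proof -
  have "r n - (n - k) = r (n - 1) + (k - 1)" using k by (intro r_diff_eq) auto
  moreover have "r (n - 1) + (k - 1) \<in> {1..r n}" by (rule edge_index_in_range) (use k in auto)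
  ultimately have idx: "r n - (n - k) \<in> {1..r n}" by simp
  then have "r n \<in> {1..r n}" by simp
  then have an_lt: "a (r n) < m" using labels an zdvd_imp_le[of "a (r n)" m] m by auto
  show "0 < a (r n - (n - k))" using labels idx by blast
  show dvd: "a (r n - (n - k)) dvd a (r n)" by (rule dvd_chain_up[OF chain]) (use idx in auto)
  show "a (r n - (n - k)) < m" using zdvd_imp_le[OF dvd] labels \<open>r n \<in> {1..r n}\<close> an_lt by fastforce
qed

lemma triangular_spline_basis_tail:
  fixes a :: "nat \<Rightarrow> int"
  assumes n: "2 \<le> n" and m: "1 < m" and labels: "\<forall>s\<in>{1..r n}. 0 < a s \<and> a s dvd m"
    and chain: "\<forall>s\<in>{1..<r n}. a s dvd a (s + 1)" and an: "a (r n) \<noteq> m"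
  shows "triangular_spline_basis n m a (m div a (r n)) (\<lambda>x. x - 1)
    (\<lambda>x. if x = 1 then 1 else a (r n - (n - x)))
    (\<lambda>x. if x = 1 then vec_of n m (\<lambda>_. 1) else tail_vec n m a x)"
proof -
  note bounds = increasing_label_bounds[OF assms]
  have L: "\<forall>s\<in>{1..r n}. a s dvd m" using labels by blast
  have "r n \<in> {1..r n}" using edge_index_in_range[of 1 2 n] n by simp
  show ?thesis
  proof unfold_locales
    show "0 < m" using m by simp
    show "\<forall>s\<in>{1..r n}. a s dvd m" by (rule L)
    show "2 \<le> m div a (r n)"
      using bounds(1)[of n] L an m n \<open>r n \<in> {1..r n}\<close> by (intro div_ge_2_if_proper_divisor) auto
    fix i assume i: "i \<in> {1..n}"
    show "(if i = 1 then 1 else a (r n - (n - i))) * (m div a (r n)) dvd m"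
      by (rule mult_quotient_dvd) (use L \<open>r n \<in> {1..r n}\<close> bounds(2)[of i] i in auto)
    show "i - 1 < i" using i by simp
    fix f assume f: "f \<in> splines n m a"
    have "a (r n - (n - i)) dvd f i - f (i - 1)" if "i \<noteq> 1"
      by (rule spline_consecutive_diff_dvd[OF L chain f]) (use i that in auto)
    then show "(if i = 1 then 1 else a (r n - (n - i))) dvd f i - f (i - 1)" by auto
  next
    fix x assume "x \<in> {1..n}"
    then show "(if x = 1 then vec_of n m (\<lambda>_. 1) else tail_vec n m a x) \<in> splines n m a"
      using vec_of_one_in_splines[OF m L] tail_vec_in_splines[OF _ L chain] m by simp
  next
    fix x i assume x: "x \<in> {1..n}" and i: "i \<in> {1..n}"
    have "a (r n - (n - i)) div a (r n - (n - i)) = 1" if "i \<noteq> 1"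
      using bounds(1)[of i] i that by simp
    moreover have "tail_vec n m a x j = (if x \<le> j \<and> j \<le> n then a (r n - (n - x)) else 0)"
      if "x \<noteq> 1" for j
    proof -
      have "x \<in> {2..n}" using x that by simp
      then show ?thesis using tail_vec_apply[where a = a, OF x bounds(1,3)] by simp
    qed
    ultimately show "diff_quot (\<lambda>x. x - 1) (\<lambda>x. if x = 1 then 1 else a (r n - (n - x)))
        (if x = 1 then vec_of n m (\<lambda>_. 1) else tail_vec n m a x) i = (if x = i then 1 else 0)"
      using x i vec_of_one_apply[OF m] by (auto simp: diff_quot_def)
  qed
qed

lemma min_flow_up_gen_set_tail:
  fixes a :: "nat \<Rightarrow> int"
  assumes n: "2 \<le> n" and m: "1 < m" and labels: "\<forall>s\<in>{1..r n}. 0 < a s \<and> a s dvd m"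
    and chain: "\<forall>s\<in>{1..<r n}. a s dvd a (s + 1)" and an: "a (r n) \<noteq> m"
  shows "min_flow_up_gen_set n m a ({vec_of n m (\<lambda>_. 1)} \<union> tail_vec n m a ` {2..n})
    \<and> spline_rank n m a = n"
proof -
  interpret triangular_spline_basis n m a "m div a (r n)" "\<lambda>x. x - 1"
    "\<lambda>x. if x = 1 then 1 else a (r n - (n - x))"
    "\<lambda>x. if x = 1 then vec_of n m (\<lambda>_. 1) else tail_vec n m a x"
    by (rule triangular_spline_basis_tail[OF assms])
  have flow: "flow_up x (if x = 1 then vec_of n m (\<lambda>_. 1) else tail_vec n m a x)"
    if "x \<in> {1..n}" for x
  proof (cases "x = 1")
    case False
    then have x2: "x \<in> {2..n}" using that by simp
    then show ?thesis
      using tail_vec_apply[where a = a, OF that increasing_label_bounds(1,3)[OF assms x2]]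
        increasing_label_bounds(1)[OF assms x2] False
      by (auto simp: flow_up_def)
  qed (use vec_of_one_apply[OF m] n in \<open>simp add: flow_up_def\<close>)
  have "{vec_of n m (\<lambda>_. 1)} \<union> tail_vec n m a ` {2..n}
      = (\<lambda>x. if x = 1 then vec_of n m (\<lambda>_. 1) else tail_vec n m a x) ` {1..n}"
    using n by (intro image_if_one_atLeastAtMost[symmetric]) simp
  then show ?thesis using min_flow_up_gen_set_basis[OF flow] spline_rank_eq by (simp only:)
qed

theorem mainTheorem4:
  fixes n :: nat and m :: int and a :: "nat \<Rightarrow> int"
  assumes n2: "2 \<le> n"
    and m1: "1 < m"
    and labels: "\<forall>s\<in>{1..r n}. 0 < a s \<and> a s dvd m \<and> zero_divisor_mod m (a s)"
  shows
    "((\<forall>s\<in>{1..<r n}. a (s + 1) dvd a s) \<and> a 1 dvd m \<and> m \<noteq> a 1 \<longrightarrow>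
        min_flow_up_gen_set n m a
          ({vec_of n m (\<lambda>_. 1)} \<union>
           (\<lambda>k. vec_of n m (\<lambda>i. if i = k then a (r (k - 1) + 1) else 0)) ` {2..n})
        \<and> spline_rank n m a = n)
   \<and> ((\<forall>s\<in>{1..<r n}. a s dvd a (s + 1)) \<and> a (r n) dvd m \<and> m \<noteq> a (r n) \<longrightarrow>
        min_flow_up_gen_set n m a
          ({vec_of n m (\<lambda>_. 1)} \<union>
           (\<lambda>k. vec_of n m (\<lambda>i. if k \<le> i then a (r n - (n - k)) else 0)) ` {2..n})
        \<and> spline_rank n m a = n)"
proof -
  have "\<forall>s\<in>{1..r n}. 0 < a s \<and> a s dvd m" using labels by blast
  then show ?thesis
    using min_flow_up_gen_set_single_entry[OF n2 m1] min_flow_up_gen_set_tail[OF n2 m1]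
    unfolding single_entry_vec_def[abs_def] tail_vec_def[abs_def] by auto
qed

end
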